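(* Let $k$ be even and let $n>k$ be an integer with $n\equiv k/2\pmod k$. Then $\mathrm{msum}(n,k)=1$, and if moreover $n$ is odd, then also $\mathrm{disc}(n,k)=1$.
   Context: Let $n,k$ be positive integers with $n>k$ and let $S_n$ be the set of permutations $\pi=(\pi_1,\dots,\pi_n)$ of $1,\dots,n$. Indices are taken cyclically: $\pi_{n+i}=\pi_i$. The $k$-consecutive sums of $\pi$ are $s_i=\sum_{j=0}^{k-1}\pi_{i+j}$ for $i=1,\dots,n$. Define $\mathrm{msum}(\pi,k)=\max\{s_i: 1\le i\le n\}-\frac{k(n+1)}{2}$, $\mathrm{msum}(n,k)=\min\{\mathrm{msum}(\pi,k):\pi\in S_n\}$, $\mathrm{disc}(\pi,k)=\max\{|s_i-\frac{k(n+1)}{2}|:1\le i\le n\}$ and $\mathrm{disc}(n,k)=\min\{\mathrm{disc}(\pi,k):\pi\in S_n\}$. *)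

theory Defs
  imports Complex_Main "HOL-Combinatorics.Multiset_Permutations"
begin

text \<open>A permutation pi = (pi_1,...,pi_n) of 1..n is a list xs with
  set xs = {1..n} and distinct xs; pi_i is xs ! (i-1).
  The i-th k-consecutive sum (i = 1..n) is written with 0-based index i < n:
  s_i = sum_{j<k} xs ! ((i + j) mod n).\<close>

definition ksum :: "nat list \<Rightarrow> nat \<Rightarrow> nat \<Rightarrow> nat" where
  "ksum xs k i = (\<Sum>j<k. xs ! ((i + j) mod length xs))"

definition msum_perm :: "nat list \<Rightarrow> nat \<Rightarrow> real" where
  "msum_perm xs k =
     Max {real (ksum xs k i) | i. i < length xs} - real k * (real (length xs) + 1) / 2"

definition msum :: "nat \<Rightarrow> nat \<Rightarrow> real" where
  "msum n k = Min ((\<lambda>xs. msum_perm xs k) ` permutations_of_set {1..n})"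

definition disc_perm :: "nat list \<Rightarrow> nat \<Rightarrow> real" where
  "disc_perm xs k =
     Max {\<bar>real (ksum xs k i) - real k * (real (length xs) + 1) / 2\<bar> | i. i < length xs}"

definition disc :: "nat \<Rightarrow> nat \<Rightarrow> real" where
  "disc n k = Min ((\<lambda>xs. disc_perm xs k) ` permutations_of_set {1..n})"

end

theory Submission
  imports Defs
begin

(* The lower bounds: the n window sums add up to k (1 + ... + n), so their average is
   k (n + 1) / 2, an integer because k is even. They are not all equal, since consecutive
   windows differ by pi_(i+k) - pi_i <> 0; hence some window exceeds the average by at
   least 1, and disc dominates msum.

   Write k = 2 m and n = r m with r = 2 q + 1,
   and fill an r x m grid row by row: column c receives the block r c + 1, ..., r c + r,
   ordered down the rows by a bijection b onto 1..r in even columns and by r + 1 - b in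
   odd columns. A window of length 2 m meets every column in two vertically adjacent
   cells, so its excess over the average is an alternating sum of the row excesses
   b a + b (a + 1) - (r + 1), which collapses to a combination of at most two of them.
   For odd m the order 1, 2q, 3, 2q - 2, ... has all row excesses in {-1, 0, 1}; for
   even m the order 1, q + 2, 2, q + 3, ... has row excesses increasing by at most 1
   from one row to the next, which bounds every window sum by the average plus 1. *)

lemma sum_lessThan_rotate:
  fixes h :: "nat \<Rightarrow> 'a::comm_monoid_add"
  assumes "0 < n"
  shows "(\<Sum>i<n. h ((i + j) mod n)) = (\<Sum>i<n. h i)"
proof (induction j)
  case 0
  show ?case by (intro sum.cong) auto
next
  case (Suc j)
  obtain n' where n: "n = Suc n'" using assms by (cases n) auto
  let ?g = "\<lambda>i. h ((i + j) mod n)"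
  have "(\<Sum>i<n. h ((i + Suc j) mod n)) = (\<Sum>i<n. ?g (Suc i mod n))"
    by (intro sum.cong) (auto simp: mod_add_left_eq)
  also have "\<dots> = (\<Sum>i<n'. ?g (Suc i)) + ?g 0"
    using n by (simp add: sum.lessThan_Suc)
  also have "\<dots> = (\<Sum>i<n. ?g i)"
    using n sum.lessThan_Suc_shift[of ?g n'] by (simp add: add.commute)
  finally show ?case using Suc by simp
qed

lemma sum_lessThan_double:
  fixes f :: "nat \<Rightarrow> 'a::comm_monoid_add"
  shows "(\<Sum>j<2 * m. f j) = (\<Sum>j<m. f j + f (j + m))"
proof -
  have "(\<Sum>j<2 * m. f j) = (\<Sum>j\<in>{0..<m}. f j) + (\<Sum>j\<in>{0 + m..<m + m}. f j)"
    by (simp add: sum.atLeastLessThan_concat mult_2 atLeast0LessThan[symmetric])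
  also have "\<dots> = (\<Sum>j<m. f j) + (\<Sum>j<m. f (j + m))"
    by (simp only: sum.shift_bounds_nat_ivl atLeast0LessThan)
  finally show ?thesis by (simp add: sum.distrib)
qed

lemma sum_alternating_signs: "(\<Sum>c<t. (-1) ^ c :: int) = int (t mod 2)"
proof (induction t)
  case (Suc t)
  then show ?case by (cases "even t") (simp_all add: mod_Suc even_iff_mod_2_eq_zero)
qed simp

lemma sum_alternating_switch:
  fixes x y :: int
  assumes "t \<le> m"
  shows "(\<Sum>c<m. (-1) ^ c * (if t \<le> c then x else y)) = int (m mod 2) * x + int (t mod 2) * (y - x)"
proof -
  have "(-1) ^ c * (if t \<le> c then x else y) = (-1) ^ c * x + (if c < t then (-1) ^ c * (y - x) else 0)"
    for c :: nat
    by (simp add: algebra_simps)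
  moreover have "{..<m} \<inter> {..<t} = {..<t}" using assms by auto
  then have "(\<Sum>c<m. if c < t then (-1) ^ c * (y - x) else 0) = (\<Sum>c<t. (-1) ^ c * (y - x))"
    using sum.inter_restrict[of "{..<m}" "\<lambda>c. (-1) ^ c * (y - x)" "{..<t}"] by simp
  ultimately show ?thesis
    by (simp add: sum.distrib sum_distrib_right[symmetric] sum_alternating_signs)
qed

lemma mod_mult_right_div:
  fixes x m r :: nat
  assumes "0 < m"
  shows "x mod (r * m) div m = x div m mod r" and "x mod (r * m) mod m = x mod m"
proof -
  have "x mod (r * m) = m * (x div m mod r) + x mod m"
    using mod_mult2_eq[of x m r] by (simp add: mult.commute)
  then show "x mod (r * m) div m = x div m mod r" "x mod (r * m) mod m = x mod m"
    using assms by simp_all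
qed

lemma bij_betw_lessThan_atLeastAtMost:
  fixes f :: "nat \<Rightarrow> nat"
  assumes "inj_on f {..<r}" and "\<And>a. a < r \<Longrightarrow> f a \<in> {1..r}"
  shows "bij_betw f {..<r} {1..r}"
proof -
  have "f ` {..<r} \<subseteq> {1..r}" using assms(2) by auto
  moreover have "card (f ` {..<r}) = card {1..r}"
    by (simp only: card_image[OF assms(1)] card_lessThan card_atLeastAtMost diff_Suc_1)
  ultimately show ?thesis using assms(1) by (simp add: bij_betw_def card_subset_eq)
qed

lemma Min_image_eqI:
  assumes "finite A" "x \<in> A" "f x \<le> c" "\<And>y. y \<in> A \<Longrightarrow> c \<le> f y"
  shows "Min (f ` A) = c"
proof (rule Min_eqI)
  show "c \<in> f ` A" using assms(2-4) by (metis antisym image_eqI)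
qed (use assms in auto)

lemma sum_ksum:
  assumes "xs \<noteq> []"
  shows "(\<Sum>i<length xs. ksum xs k i) = k * sum_list xs"
proof -
  have "(\<Sum>i<length xs. ksum xs k i) = (\<Sum>j<k. \<Sum>i<length xs. xs ! ((i + j) mod length xs))"
    unfolding ksum_def by (rule sum.swap)
  also have "\<dots> = (\<Sum>j<k. \<Sum>i<length xs. xs ! i)"
    using assms by (simp add: sum_lessThan_rotate)
  finally show ?thesis by (simp add: sum_list_sum_nth atLeast0LessThan)
qed

lemma ksum_Suc:
  "ksum xs k (Suc i) + xs ! (i mod length xs) = ksum xs k i + xs ! ((i + k) mod length xs)"
proof -
  let ?f = "\<lambda>j. xs ! ((i + j) mod length xs)"
  have "(\<Sum>j<Suc k. ?f j) = (\<Sum>j<k. ?f (Suc j)) + ?f 0"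
    using sum.lessThan_Suc_shift[of ?f k] by simp
  then show ?thesis unfolding ksum_def by simp
qed

lemma permutation_sum_list:
  fixes xs :: "nat list"
  assumes "xs \<in> permutations_of_set {1..n}"
  shows "2 * sum_list xs = n * (n + 1)"
proof -
  have "sum_list xs = \<Sum>{1..n}"
    using assms sum_list_distinct_conv_sum_set[of xs "\<lambda>x. x"]
    by (simp add: permutations_of_setD)
  then show ?thesis using double_gauss_sum_from_Suc_0[of n, where ?'a = nat] by simp
qed

lemma ksum_exceeds_average:
  assumes xs: "xs \<in> permutations_of_set {1..n}" and k: "0 < k" "k < n"
  shows "\<exists>i<n. k * (n + 1) < 2 * ksum xs k i"
proof (rule ccontr)
  assume "\<not> ?thesis"
  then have le: "\<forall>i<n. 2 * ksum xs k i \<le> k * (n + 1)" by auto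
  have len: "length xs = n" using length_finite_permutations_of_set[OF xs] by simp
  have "xs \<noteq> []" using len k by auto
  then have "2 * (\<Sum>i<n. ksum xs k i) = k * (n * (n + 1))"
    using sum_ksum[of xs k] permutation_sum_list[OF xs] len by simp
  then have "(\<Sum>i<n. 2 * ksum xs k i) = (\<Sum>i<n. k * (n + 1))"
    by (simp add: sum_distrib_left[symmetric] algebra_simps)
  then have eq: "\<forall>i<n. 2 * ksum xs k i = k * (n + 1)"
    using le sum_strict_mono_ex1[of "{..<n}" "\<lambda>i. 2 * ksum xs k i" "\<lambda>_. k * (n + 1)"]
    by (metis finite_lessThan le_neq_implies_less lessThan_iff less_irrefl)
  have "ksum xs k 1 + xs ! 0 = ksum xs k 0 + xs ! k"
    using ksum_Suc[of xs k 0] len k by simp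
  moreover have "ksum xs k 1 = ksum xs k 0" 
    using eq[rule_format, of 0] eq[rule_format, of 1] k by simp
  ultimately have "xs ! 0 = xs ! k" by simp
  then show False
    using k len permutations_of_setD(2)[OF xs] nth_eq_iff_index_eq[of xs 0 k] by simp
qed

lemma msum_perm_ge:
  assumes "i < length xs"
  shows "real (ksum xs k i) - real k * (real (length xs) + 1) / 2 \<le> msum_perm xs k"
  unfolding msum_perm_def using assms by (intro diff_right_mono Max_ge) auto

lemma msum_perm_le:
  assumes "xs \<noteq> []"
    and "\<And>i. i < length xs \<Longrightarrow> real (ksum xs k i) - real k * (real (length xs) + 1) / 2 \<le> d"
  shows "msum_perm xs k \<le> d"
proof -
  have "Max {real (ksum xs k i) | i. i < length xs} \<le> d + real k * (real (length xs) + 1) / 2"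
    using assms by (subst Max_le_iff) (auto simp: diff_le_eq)
  then show ?thesis unfolding msum_perm_def by simp
qed

lemma disc_perm_le:
  assumes "xs \<noteq> []"
    and "\<And>i. i < length xs \<Longrightarrow> \<bar>real (ksum xs k i) - real k * (real (length xs) + 1) / 2\<bar> \<le> d"
  shows "disc_perm xs k \<le> d"
  using assms unfolding disc_perm_def by (subst Max_le_iff) auto

lemma msum_perm_le_disc_perm:
  assumes "xs \<noteq> []"
  shows "msum_perm xs k \<le> disc_perm xs k"
proof -
  let ?S = "{real (ksum xs k i) | i. i < length xs}"
  have "Max ?S \<in> ?S" using assms by (intro Max_in) auto
  then obtain i where i: "i < length xs" "Max ?S = real (ksum xs k i)" by auto
  have "\<bar>real (ksum xs k i) - real k * (real (length xs) + 1) / 2\<bar> \<le> disc_perm xs k"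
    unfolding disc_perm_def using i(1) by (intro Max_ge) auto
  then show ?thesis unfolding msum_perm_def i(2) by linarith
qed

lemma one_le_msum_perm:
  assumes xs: "xs \<in> permutations_of_set {1..n}" and k: "0 < k" "k < n" "even k"
  shows "1 \<le> msum_perm xs k"
proof -
  obtain i where i: "i < n" "k * (n + 1) < 2 * ksum xs k i"
    using ksum_exceeds_average[OF xs k(1,2)] by blast
  obtain t where t: "k = 2 * t" using k(3) by blast
  then have "t * (n + 1) < ksum xs k i" using i(2) by (simp only: mult.assoc mult_less_cancel1)
  then have "k * (n + 1) + 2 \<le> 2 * ksum xs k i" using t by simp
  then have "1 \<le> real (ksum xs k i) - real k * (real n + 1) / 2"
    by (simp add: field_simps flip: of_nat_mult of_nat_add of_nat_le_iff)
  also have "\<dots> \<le> msum_perm xs k"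
    using msum_perm_ge[of i xs k] i(1) length_finite_permutations_of_set[OF xs] by simp
  finally show ?thesis .
qed

lemma ksum_deviation_of_int:
  "real (ksum xs (2 * m) i) - real (2 * m) * (real (length xs) + 1) / 2
     = real_of_int (int (ksum xs (2 * m) i) - int m * (int (length xs) + 1))"
  by simp

definition grid_entry :: "nat \<Rightarrow> (nat \<Rightarrow> nat) \<Rightarrow> nat \<Rightarrow> nat \<Rightarrow> nat" where
  "grid_entry r b a c = r * c + (if even c then b a else r + 1 - b a)"

definition grid_list :: "nat \<Rightarrow> nat \<Rightarrow> (nat \<Rightarrow> nat) \<Rightarrow> nat list" where
  "grid_list r m b = map (\<lambda>p. grid_entry r b (p div m) (p mod m)) [0..<r * m]"

definition row_excess :: "nat \<Rightarrow> (nat \<Rightarrow> nat) \<Rightarrow> nat \<Rightarrow> int" where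
  "row_excess r b a = int (b a) + int (b (Suc a mod r)) - int r - 1"

lemma grid_entry_bounds:
  assumes "b a \<in> {1..r}"
  shows "r * c < grid_entry r b a c" "grid_entry r b a c \<le> r * c + r"
  using assms unfolding grid_entry_def by auto

lemma grid_list_permutation:
  assumes b: "bij_betw b {..<r} {1..r}"
  shows "grid_list r m b \<in> permutations_of_set {1..r * m}"
proof -
  let ?G = "\<lambda>p. grid_entry r b (p div m) (p mod m)"
  have "?G p \<in> {1..r * m}" if p: "p < r * m" for p
  proof -
    have "0 < m" using p by (cases m) auto
    then have "p div m < r" "Suc (p mod m) \<le> m"
      using p by (auto simp: less_mult_imp_div_less mult.commute Suc_leI)
    then have "r * (p mod m) + r \<le> r * m"
      using mult_le_mono2[of "Suc (p mod m)" m r] by simp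
    moreover have "b (p div m) \<in> {1..r}" using bij_betw_apply[OF b] \<open>p div m < r\<close> by simp
    ultimately show ?thesis using grid_entry_bounds[of b "p div m" r "p mod m"] by auto
  qed
  moreover have "v \<in> ?G ` {0..<r * m}" if v: "v \<in> {1..r * m}" for v
  proof -
    define c where "c = (v - 1) div r"
    define u where "u = (v - 1) mod r"
    have r0: "0 < r" using v by (cases r) auto
    have c: "c < m"
      using v by (simp add: c_def div_less_iff_less_mult r0 mult.commute) linarith
    have u: "u < r" using r0 by (simp add: u_def)
    then have "(if even c then u + 1 else r - u) \<in> {1..r}" by auto
    then obtain a where a: "a < r" "b a = (if even c then u + 1 else r - u)"
      using bij_betw_imp_surj_on[OF b] by (metis imageE lessThan_iff)
    have "a * m + c < Suc a * m" using c by simp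
    also have "\<dots> \<le> r * m" using a(1) by (intro mult_le_mono1) simp
    finally have "a * m + c < r * m" .
    moreover have "v = r * c + u + 1"
      using v div_mult_mod_eq[of "v - 1" r] unfolding c_def u_def by (simp add: mult.commute)
    then have "?G (a * m + c) = v"
      using a u c unfolding grid_entry_def by auto
    ultimately show ?thesis by force
  qed
  ultimately have "set (grid_list r m b) = {1..r * m}"
    unfolding grid_list_def by auto
  moreover have "distinct (grid_list r m b)"
    using calculation by (intro card_distinct) (simp add: grid_list_def)
  ultimately show ?thesis by (rule permutations_of_setI)
qed

(* m consecutive positions meet every column once: the columns from p mod m on in row
   p div m, the earlier ones in the next row. *)
lemma sum_window_rows:
  fixes f :: "nat \<Rightarrow> nat \<Rightarrow> 'a::comm_monoid_add"
  assumes m: "0 < m" and p: "p < r * m"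
  shows "(\<Sum>j<m. f ((p + j) div m mod r) ((p + j) mod m)) =
         (\<Sum>c<m. f (if p mod m \<le> c then p div m else Suc (p div m) mod r) c)"
    (is "_ = (\<Sum>c<m. ?\<phi> c)")
proof -
  have a: "p div m < r" using p by (simp add: less_mult_imp_div_less)
  have "f ((p + j) div m mod r) ((p + j) mod m) = ?\<phi> ((j + p mod m) mod m)" if j: "j < m" for j
  proof -
    have p_j: "p + j = p mod m + j + p div m * m" by simp
    have split: "(p + j) div m = p div m + (p mod m + j) div m"
      "(p + j) mod m = (p mod m + j) mod m"
      using div_mult_self1[of m "p mod m + j" "p div m"] m unfolding p_j[symmetric]
      by (simp_all add: mod_add_left_eq)
    show ?thesis
    proof (cases "p mod m + j < m")
      case True
      then show ?thesis using split a by (simp add: add.commute)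
    next
      case False
      have "p mod m < m" using m by simp
      then have "p mod m + j < 2 * m" using j by linarith
      then have "(p mod m + j) div m = 1" "(p mod m + j) mod m = p mod m + j - m"
        using False m by (simp_all add: le_div_geq le_mod_geq)
      moreover have "\<not> p mod m \<le> p mod m + j - m" using j False by linarith
      ultimately show ?thesis using split by (simp add: add.commute)
    qed
  qed
  then have "(\<Sum>j<m. f ((p + j) div m mod r) ((p + j) mod m)) = (\<Sum>j<m. ?\<phi> ((j + p mod m) mod m))"
    by (intro sum.cong) auto
  also have "\<dots> = (\<Sum>c<m. ?\<phi> c)" using m by (rule sum_lessThan_rotate)
  finally show ?thesis .
qed

lemma grid_pair_sum:
  assumes "b a \<in> {1..r}" "b (Suc a mod r) \<in> {1..r}"
  shows "int (grid_entry r b a c + grid_entry r b (Suc a mod r) c) =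
    2 * int r * int c + int r + 1 + (-1) ^ c * row_excess r b a"
  using assms unfolding grid_entry_def row_excess_def
  by (cases "even c") (simp_all add: of_nat_diff algebra_simps)

lemma sum_column_offsets:
  "(\<Sum>c<m. 2 * int r * int c + int r + 1) = int m * (int r * int m + 1)"
  by (induction m) (simp_all add: algebra_simps)

lemma ksum_grid_list:
  assumes b: "\<And>a. a < r \<Longrightarrow> b a \<in> {1..r}" and m: "0 < m" and p: "p < r * m"
  shows "int (ksum (grid_list r m b) (2 * m) p) =
    int m * (int r * int m + 1) + int (m mod 2) * row_excess r b (p div m)
    + int (p mod m mod 2) * (row_excess r b (Suc (p div m) mod r) - row_excess r b (p div m))"
proof -
  let ?E = "grid_entry r b" and ?\<delta> = "row_excess r b"
  let ?a = "p div m" and ?a' = "Suc (p div m) mod r"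
  define row where "row c = (if p mod m \<le> c then ?a else ?a')" for c
  have r: "0 < r" using p by (cases r) auto
  have row: "row c < r" for c
    using p r by (simp add: row_def less_mult_imp_div_less)
  have len: "length (grid_list r m b) = r * m" by (simp add: grid_list_def)
  have nth: "grid_list r m b ! (y mod (r * m)) = ?E (y div m mod r) (y mod m)" for y
    using m r by (simp add: grid_list_def mod_mult_right_div)
  have "ksum (grid_list r m b) (2 * m) p =
      (\<Sum>j<m. ?E ((p + j) div m mod r) ((p + j) mod m)
             + ?E (Suc ((p + j) div m mod r) mod r) ((p + j) mod m))"
    unfolding ksum_def sum_lessThan_double
    using m by (simp add: len nth add.assoc[symmetric] mod_Suc_eq)
  also have "\<dots> = (\<Sum>c<m. ?E (row c) c + ?E (Suc (row c) mod r) c)"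
    unfolding row_def by (rule sum_window_rows[OF m p])
  finally have "int (ksum (grid_list r m b) (2 * m) p) =
      (\<Sum>c<m. 2 * int r * int c + int r + 1 + (-1) ^ c * ?\<delta> (row c))"
    using grid_pair_sum b row r by simp
  also have "\<dots> = int m * (int r * int m + 1) + (\<Sum>c<m. (-1) ^ c * ?\<delta> (row c))"
    using sum_column_offsets[where m = m and r = r] by (simp add: sum.distrib)
  also have "(\<Sum>c<m. (-1) ^ c * ?\<delta> (row c))
      = int (m mod 2) * ?\<delta> ?a + int (p mod m mod 2) * (?\<delta> ?a' - ?\<delta> ?a)"
    unfolding row_def if_distrib[of ?\<delta>] using m by (intro sum_alternating_switch) simp
  finally show ?thesis by simp
qed

definition odd_up_even_down :: "nat \<Rightarrow> nat \<Rightarrow> nat" where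
  "odd_up_even_down q a = (if even a then a + 1 else 2 * q + 1 - a)"

definition interleave_halves :: "nat \<Rightarrow> nat \<Rightarrow> nat" where
  "interleave_halves q a = (if even a then a div 2 + 1 else q + 2 + a div 2)"

lemma bij_odd_up_even_down: "bij_betw (odd_up_even_down q) {..<2 * q + 1} {1..2 * q + 1}"
proof (rule bij_betw_lessThan_atLeastAtMost)
  show "inj_on (odd_up_even_down q) {..<2 * q + 1}"
    by (auto simp: inj_on_def odd_up_even_down_def split: if_splits; presburger)
qed (auto simp: odd_up_even_down_def)

lemma bij_interleave_halves: "bij_betw (interleave_halves q) {..<2 * q + 1} {1..2 * q + 1}"
proof (rule bij_betw_lessThan_atLeastAtMost)
  show "inj_on (interleave_halves q) {..<2 * q + 1}"
    by (auto simp: inj_on_def interleave_halves_def split: if_splits; presburger)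
qed (auto simp: interleave_halves_def; presburger)

lemma row_excess_odd_up_even_down:
  assumes "a < 2 * q + 1"
  shows "\<bar>row_excess (2 * q + 1) (odd_up_even_down q) a\<bar> \<le> 1"
proof -
  consider "Suc a < 2 * q + 1" | "a = 2 * q" using assms by linarith
  then show ?thesis
  proof cases
    case 1
    then show ?thesis unfolding row_excess_def odd_up_even_down_def
      by (auto simp: of_nat_diff)
  next
    case 2
    then show ?thesis unfolding row_excess_def odd_up_even_down_def by simp
  qed
qed

lemma row_excess_interleave_halves:
  assumes "a < 2 * q + 1"
  shows "row_excess (2 * q + 1) (interleave_halves q) a = (if a = 2 * q then - int q else int a - int q + 1)"
  using assms unfolding row_excess_def interleave_halves_def
  by (auto simp: mod_Suc; presburger)

lemma row_excess_interleave_halves_step: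
  assumes "a < 2 * q + 1"
  shows "row_excess (2 * q + 1) (interleave_halves q) (Suc a mod (2 * q + 1))
    - row_excess (2 * q + 1) (interleave_halves q) a \<le> 1"
proof -
  have "Suc a mod (2 * q + 1) < 2 * q + 1" by simp
  then show ?thesis
    using assms row_excess_interleave_halves[of a q]
      row_excess_interleave_halves[of "Suc a mod (2 * q + 1)" q]
    by (cases "a = 2 * q") (auto simp: mod_Suc)
qed

lemma ksum_grid_odd_up_even_down:
  assumes m: "odd m" and p: "p < (2 * q + 1) * m"
  shows "\<bar>int (ksum (grid_list (2 * q + 1) m (odd_up_even_down q)) (2 * m) p)
           - int m * (int ((2 * q + 1) * m) + 1)\<bar> \<le> 1"
proof -
  let ?\<delta> = "row_excess (2 * q + 1) (odd_up_even_down q)"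
  have m0: "0 < m" using m by (cases m) auto
  have a: "p div m < 2 * q + 1" "Suc (p div m) mod (2 * q + 1) < 2 * q + 1"
    using p by (simp_all add: less_mult_imp_div_less)
  have b: "odd_up_even_down q a \<in> {1..2 * q + 1}" if "a < 2 * q + 1" for a
    using bij_betw_apply[OF bij_odd_up_even_down] that by simp
  have "int (ksum (grid_list (2 * q + 1) m (odd_up_even_down q)) (2 * m) p)
        - int m * (int ((2 * q + 1) * m) + 1)
      = (if even (p mod m) then ?\<delta> (p div m) else ?\<delta> (Suc (p div m) mod (2 * q + 1)))"
    using ksum_grid_list[where b = "odd_up_even_down q", OF b m0 p] m
    by (cases "even (p mod m)") (simp_all add: mod2_eq_if[of "p mod m"] mod2_eq_if[of m] algebra_simps)
  then show ?thesis
    using row_excess_odd_up_even_down[OF a(1)] row_excess_odd_up_even_down[OF a(2)] by simp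
qed

lemma ksum_grid_interleave_halves:
  assumes m: "even m" "0 < m" and p: "p < (2 * q + 1) * m"
  shows "int (ksum (grid_list (2 * q + 1) m (interleave_halves q)) (2 * m) p)
           - int m * (int ((2 * q + 1) * m) + 1) \<le> 1"
proof -
  let ?\<delta> = "row_excess (2 * q + 1) (interleave_halves q)"
  have a: "p div m < 2 * q + 1"
    using p by (simp add: less_mult_imp_div_less)
  have b: "interleave_halves q a \<in> {1..2 * q + 1}" if "a < 2 * q + 1" for a
    using bij_betw_apply[OF bij_interleave_halves] that by simp
  have "int (ksum (grid_list (2 * q + 1) m (interleave_halves q)) (2 * m) p)
        - int m * (int ((2 * q + 1) * m) + 1)
      = (if even (p mod m) then 0 else ?\<delta> (Suc (p div m) mod (2 * q + 1)) - ?\<delta> (p div m))"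
    using ksum_grid_list[where b = "interleave_halves q", OF b m(2) p] m
    by (cases "even (p mod m)") (simp_all add: mod2_eq_if[of "p mod m"] mod2_eq_if[of m] algebra_simps)
  then show ?thesis
    using row_excess_interleave_halves_step[OF a] by simp
qed

lemma balanced_permutation_exists:
  assumes "0 < m"
  shows "\<exists>xs \<in> permutations_of_set {1..(2 * q + 1) * m}.
    msum_perm xs (2 * m) \<le> 1 \<and> (odd m \<longrightarrow> disc_perm xs (2 * m) \<le> 1)"
proof (cases "odd m")
  case True
  let ?xs = "grid_list (2 * q + 1) m (odd_up_even_down q)"
  have len: "length ?xs = (2 * q + 1) * m" by (simp add: grid_list_def)
  then have ne: "?xs \<noteq> []" using assms by auto
  have "\<bar>real (ksum ?xs (2 * m) i) - real (2 * m) * (real (length ?xs) + 1) / 2\<bar> \<le> 1"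
    if "i < length ?xs" for i
  proof -
    have "\<bar>int (ksum ?xs (2 * m) i) - int m * (int (length ?xs) + 1)\<bar> \<le> 1"
      using ksum_grid_odd_up_even_down[OF True, of i q] that len by simp
    then show ?thesis
      unfolding ksum_deviation_of_int by (simp only: of_int_abs[symmetric] of_int_le_1_iff)
  qed
  then have "disc_perm ?xs (2 * m) \<le> 1" by (rule disc_perm_le[OF ne])
  moreover have "msum_perm ?xs (2 * m) \<le> 1"
    using msum_perm_le_disc_perm[OF ne] calculation by (rule order_trans)
  ultimately show ?thesis
    using grid_list_permutation[OF bij_odd_up_even_down] by blast
next
  case False
  let ?xs = "grid_list (2 * q + 1) m (interleave_halves q)"
  have len: "length ?xs = (2 * q + 1) * m" by (simp add: grid_list_def)
  then have ne: "?xs \<noteq> []" using assms by auto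
  have "real (ksum ?xs (2 * m) i) - real (2 * m) * (real (length ?xs) + 1) / 2 \<le> 1"
    if "i < length ?xs" for i
  proof -
    have "int (ksum ?xs (2 * m) i) - int m * (int (length ?xs) + 1) \<le> 1"
      using ksum_grid_interleave_halves[OF _ assms, of i q] False that len by simp
    then show ?thesis
      unfolding ksum_deviation_of_int by (simp only: of_int_le_1_iff)
  qed
  then have "msum_perm ?xs (2 * m) \<le> 1" by (rule msum_perm_le[OF ne])
  then show ?thesis
    using grid_list_permutation[OF bij_interleave_halves] False by blast
qed

theorem corollary1p5:
  fixes n k :: nat
  assumes "0 < k" and "even k" and "k < n" and "n mod k = k div 2"
  shows "msum n k = 1 \<and> (odd n \<longrightarrow> disc n k = 1)"
proof -
  define m where "m = k div 2"
  have k: "k = 2 * m" and "n mod k = m" using assms(2,4) by (simp_all add: m_def)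
  then have n: "n = (2 * (n div k) + 1) * m"
    using div_mult_mod_eq[of n k] by (simp add: algebra_simps)
  have "0 < m" using \<open>0 < k\<close> k by simp
  have "odd m" if "odd n" using that by (subst (asm) n) simp
  then obtain xs where xs: "xs \<in> permutations_of_set {1..n}" "msum_perm xs k \<le> 1"
    and disc_xs: "odd n \<Longrightarrow> disc_perm xs k \<le> 1"
    using balanced_permutation_exists[OF \<open>0 < m\<close>, of "n div k"] n k by auto
  have lower: "1 \<le> msum_perm ys k" and "ys \<noteq> []"
    if "ys \<in> permutations_of_set {1..n}" for ys
    using one_le_msum_perm[OF that assms(1,3,2)] length_finite_permutations_of_set[OF that] assms(3)
    by auto
  then have lower_disc: "1 \<le> disc_perm ys k" if "ys \<in> permutations_of_set {1..n}" for ys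
    using msum_perm_le_disc_perm that by (blast intro: order_trans)
  have "msum n k = 1"
    unfolding msum_def using xs lower by (intro Min_image_eqI) auto
  moreover have "disc n k = 1" if "odd n"
    unfolding disc_def using xs disc_xs[OF that] lower_disc by (intro Min_image_eqI) auto
  ultimately show ?thesis by blast
qed

end
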